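(* Let $(m_1,n_1)$ and $(m_2,n_2)$ be allowable pairs such that the sets $\{|t_1(m_1,n_1)|,|t_2(m_1,n_1)|,|t_3(m_1,n_1)|\}$ and $\{|t_1(m_2,n_2)|,|t_2(m_2,n_2)|,|t_3(m_2,n_2)|\}$ coincide. Then $c_1=-\frac{A(m_1,n_1)}{B(m_1,n_1)}$ equals $c_2=-\frac{A(m_2,n_2)}{B(m_2,n_2)}$. In other words, the absolute values of the numerators of the elements of the rational $3$-cycle of $f_c(x)=x^2+c$ determine $c$.
   Context: An allowable pair is $(m,n)\in\mathbb{Z}^2$ with $\gcd(m,n)=1$ and $mn(m+n)\neq0$. $t_1(m,n)=m^3+2m^2n+mn^2+n^3$, $t_2(m,n)=m^3-mn^2-n^3$, $t_3(m,n)=m^3+2m^2n+3mn^2+n^3$; $A(m,n)=m^6+2m^5n+4m^4n^2+8m^3n^3+9m^2n^4+4mn^5+n^6$, $B(m,n)=4m^2n^2(m+n)^2$. For an allowable pair, $f_c$ with $c=-A/B$ has the rational $3$-cycle $\{\frac{t_1}{2mn(m+n)},\frac{t_2}{2mn(m+n)},-\frac{t_3}{2mn(m+n)}\}$, fractions in lowest terms. *)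

theory Defs
  imports Complex_Main
begin

definition allowable :: "int \<Rightarrow> int \<Rightarrow> bool" where
  "allowable m n \<longleftrightarrow> gcd m n = 1 \<and> m * n * (m + n) \<noteq> 0"

definition t1 :: "int \<Rightarrow> int \<Rightarrow> int" where
  "t1 m n = m^3 + 2*m^2*n + m*n^2 + n^3"

definition t2 :: "int \<Rightarrow> int \<Rightarrow> int" where
  "t2 m n = m^3 - m*n^2 - n^3"

definition t3 :: "int \<Rightarrow> int \<Rightarrow> int" where
  "t3 m n = m^3 + 2*m^2*n + 3*m*n^2 + n^3"

definition A :: "int \<Rightarrow> int \<Rightarrow> int" where
  "A m n = m^6 + 2*m^5*n + 4*m^4*n^2 + 8*m^3*n^3 + 9*m^2*n^4 + 4*m*n^5 + n^6"

definition B :: "int \<Rightarrow> int \<Rightarrow> int" where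
  "B m n = 4*m^2*n^2*(m+n)^2"

definition cval :: "int \<Rightarrow> int \<Rightarrow> rat" where
  "cval m n = - (of_int (A m n) / of_int (B m n))"

end

theory Submission
  imports Defs
begin

text \<open>Over the common denominator \<open>D = 2mn(m+n)\<close> the cycle has numerators \<open>t\<^sub>1, t\<^sub>2, -t\<^sub>3\<close>,
and \<open>c\<close> is determined by their symmetric functions: \<open>3A = \<Sigma> a\<^sub>i\<^sup>2 - D \<Sigma> a\<^sub>i\<close>,
\<open>D\<^sup>3 = (a\<^sub>1+a\<^sub>2)(a\<^sub>2+a\<^sub>3)(a\<^sub>3+a\<^sub>1)\<close> and \<open>B = D\<^sup>2\<close>. So it suffices that the
numerators of the second cycle are \<open>\<epsilon>\<close> times a permutation of those of the first, with one
common sign \<open>\<epsilon>\<close>. The sign is forced by \<open>N = m\<^sup>2+mn+n\<^sup>2\<close> of the first pair: \<open>N\<close> divides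
every difference \<open>a\<^sub>i - a\<^sub>j\<close> exactly once, so a sign change between two numerators of the
second cycle makes their sum exactly divisible by \<open>N\<close>, and a non-constant sign pattern
does so for two pair sums. But the pair sums \<open>2m\<^sup>2(m+n)\<close>, \<open>-2n(m+n)\<^sup>2\<close>, \<open>-2mn\<^sup>2\<close> are
built from the pairwise coprime \<open>m, n, m+n\<close>, so an odd divisor of two of them has its square
dividing one of them.\<close>

definition exactly_dvd :: "'a::comm_ring_1 \<Rightarrow> 'a \<Rightarrow> bool" where
  "exactly_dvd d x \<longleftrightarrow> d dvd x \<and> \<not> d^2 dvd x"

lemma exactly_dvd_minus [simp]: "exactly_dvd d (- x) \<longleftrightarrow> exactly_dvd d x"
  by (simp add: exactly_dvd_def)

lemma exactly_dvd_diff_commute: "exactly_dvd d (a - b) \<longleftrightarrow> exactly_dvd d (b - a)"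
  by (metis exactly_dvd_minus minus_diff_eq)

lemma exactly_dvd_mult_coprime:
  fixes d k x :: int
  assumes "coprime d k"
  shows "exactly_dvd d (k * x) \<longleftrightarrow> exactly_dvd d x"
  using assms by (simp add: exactly_dvd_def coprime_dvd_mult_right_iff)

lemma exactly_dvd_mult_self:
  fixes d x :: int
  assumes "d \<noteq> 0" "\<not> is_unit d" "coprime d x"
  shows "exactly_dvd d (x * d)"
proof -
  have "\<not> d * d dvd x * d"
  proof
    assume "d * d dvd x * d"
    then have "d dvd x" using \<open>d \<noteq> 0\<close> by simp
    with \<open>coprime d x\<close> have "is_unit d" by (metis coprime_common_divisor dvd_refl)
    with assms(2) show False ..
  qed
  then show ?thesis by (simp add: exactly_dvd_def power2_eq_square)
qed

lemma signs_uniform: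
  fixes d c1 c2 c3 e1 e2 e3 :: int
  assumes signs: "e1 \<in> {1, -1}" "e2 \<in> {1, -1}" "e3 \<in> {1, -1}"
    and diffs: "exactly_dvd d (c1 - c2)" "exactly_dvd d (c2 - c3)" "exactly_dvd d (c3 - c1)"
    and sums: "\<not> (exactly_dvd d (e1*c1 + e2*c2) \<and> exactly_dvd d (e2*c2 + e3*c3))"
      "\<not> (exactly_dvd d (e2*c2 + e3*c3) \<and> exactly_dvd d (e3*c3 + e1*c1))"
      "\<not> (exactly_dvd d (e3*c3 + e1*c1) \<and> exactly_dvd d (e1*c1 + e2*c2))"
  shows "e1 = e2 \<and> e2 = e3"
proof (rule ccontr)
  have opposite: "exactly_dvd d (e*x + (-e)*y)" if "e \<in> {1, -1}" "exactly_dvd d (x - y)" for e x y :: int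
    using that exactly_dvd_diff_commute[of d x y] by auto
  assume "\<not> (e1 = e2 \<and> e2 = e3)"
  then consider "e2 = -e1" "e3 = -e2" | "e3 = -e2" "e1 = -e3" | "e1 = -e3" "e2 = -e1"
    using signs by auto
  then show False
  proof cases
    case 1
    then show False using opposite[OF signs(1) diffs(1)] opposite[OF signs(2) diffs(2)] sums(1) by simp
  next
    case 2
    then show False using opposite[OF signs(2) diffs(2)] opposite[OF signs(3) diffs(3)] sums(2) by simp
  next
    case 3
    then show False using opposite[OF signs(3) diffs(3)] opposite[OF signs(1) diffs(1)] sums(3) by simp
  qed
qed

lemma symmetric_fun_perm_eq:
  assumes swap12: "\<And>x y z. f x y z = f y x z" and swap23: "\<And>x y z. f x y z = f x z y"
    and "c1 \<in> {a1, a2, a3}" "c2 \<in> {a1, a2, a3}" "c3 \<in> {a1, a2, a3}" "distinct [c1, c2, c3]"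
  shows "f c1 c2 c3 = f a1 a2 a3"
proof -
  have p1: "f a2 a1 a3 = f a1 a2 a3" by (rule swap12)
  have p2: "f a1 a3 a2 = f a1 a2 a3" by (rule swap23)
  have p3: "f a3 a1 a2 = f a1 a2 a3" using swap12[of a3 a1 a2] p2 by simp
  have p4: "f a2 a3 a1 = f a1 a2 a3" using swap23[of a2 a3 a1] p1 by simp
  have p5: "f a3 a2 a1 = f a1 a2 a3" using swap12[of a3 a2 a1] p4 by simp
  show ?thesis using assms(3-) p1 p2 p3 p4 p5 by auto
qed

lemma signed_permutation_of_abs:
  fixes d a1 a2 a3 b1 b2 b3 :: int
  assumes abs_in: "\<bar>b1\<bar> \<in> {\<bar>a1\<bar>, \<bar>a2\<bar>, \<bar>a3\<bar>}" "\<bar>b2\<bar> \<in> {\<bar>a1\<bar>, \<bar>a2\<bar>, \<bar>a3\<bar>}"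
      "\<bar>b3\<bar> \<in> {\<bar>a1\<bar>, \<bar>a2\<bar>, \<bar>a3\<bar>}"
    and abs_distinct: "distinct [\<bar>b1\<bar>, \<bar>b2\<bar>, \<bar>b3\<bar>]"
    and diffs: "exactly_dvd d (a1 - a2)" "exactly_dvd d (a2 - a3)" "exactly_dvd d (a1 - a3)"
    and sums: "\<not> (exactly_dvd d (b1 + b2) \<and> exactly_dvd d (b2 + b3))"
      "\<not> (exactly_dvd d (b2 + b3) \<and> exactly_dvd d (b3 + b1))"
      "\<not> (exactly_dvd d (b3 + b1) \<and> exactly_dvd d (b1 + b2))"
  obtains \<epsilon> c1 c2 c3 where "\<epsilon> \<in> {1, -1}"
    "c1 \<in> {a1, a2, a3}" "c2 \<in> {a1, a2, a3}" "c3 \<in> {a1, a2, a3}" "distinct [c1, c2, c3]"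
    "b1 = \<epsilon> * c1" "b2 = \<epsilon> * c2" "b3 = \<epsilon> * c3"
proof -
  have signed: "\<exists>e c. e \<in> {1, -1} \<and> c \<in> {a1, a2, a3} \<and> b = e * c"
    if "\<bar>b\<bar> \<in> {\<bar>a1\<bar>, \<bar>a2\<bar>, \<bar>a3\<bar>}" for b
  proof -
    from that obtain c where c: "c \<in> {a1, a2, a3}" "\<bar>b\<bar> = \<bar>c\<bar>" by blast
    from c(2) have "b = 1 * c \<or> b = -1 * c" by (simp add: abs_eq_iff)
    with c(1) show ?thesis by blast
  qed
  obtain e1 c1 where 1: "e1 \<in> {1, -1}" "c1 \<in> {a1, a2, a3}" "b1 = e1 * c1" using signed[OF abs_in(1)] by blast
  obtain e2 c2 where 2: "e2 \<in> {1, -1}" "c2 \<in> {a1, a2, a3}" "b2 = e2 * c2" using signed[OF abs_in(2)] by blast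
  obtain e3 c3 where 3: "e3 \<in> {1, -1}" "c3 \<in> {a1, a2, a3}" "b3 = e3 * c3" using signed[OF abs_in(3)] by blast
  have "\<bar>b1\<bar> = \<bar>c1\<bar>" "\<bar>b2\<bar> = \<bar>c2\<bar>" "\<bar>b3\<bar> = \<bar>c3\<bar>"
    using 1 2 3 by (auto simp: abs_mult)
  with abs_distinct have c_distinct: "distinct [c1, c2, c3]" by auto
  have diffs': "exactly_dvd d (a2 - a1)" "exactly_dvd d (a3 - a2)" "exactly_dvd d (a3 - a1)"
    using diffs exactly_dvd_diff_commute by blast+
  have exact: "exactly_dvd d (x - y)" if "x \<in> {a1, a2, a3}" "y \<in> {a1, a2, a3}" "x \<noteq> y" for x y
    using that diffs diffs' by auto
  have "exactly_dvd d (c1 - c2)" "exactly_dvd d (c2 - c3)" "exactly_dvd d (c3 - c1)"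
    using exact[OF 1(2) 2(2)] exact[OF 2(2) 3(2)] exact[OF 3(2) 1(2)] c_distinct by auto
  then have "e1 = e2 \<and> e2 = e3"
    by (rule signs_uniform[OF 1(1) 2(1) 3(1)]) (fact sums[unfolded 1(3) 2(3) 3(3)])+
  then show thesis using that[OF 1(1) 1(2) 2(2) 3(2) c_distinct] 1(3) 2(3) 3(3) by simp
qed

lemma odd_power_eq_imp_eq:
  fixes a b :: "'a::linordered_idom"
  assumes "odd n" "a ^ n = b ^ n"
  shows "a = b"
proof -
  have n: "0 < n" using odd_pos[OF assms(1)] .
  have sign: "0 \<le> a \<longleftrightarrow> 0 \<le> b"
    using zero_le_odd_power[OF assms(1), of a] zero_le_odd_power[OF assms(1), of b] assms(2) by simp
  show ?thesis
  proof (cases "0 \<le> a")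
    case True
    with sign have "0 \<le> b" by simp
    with True assms(2) show ?thesis using power_eq_iff_eq_base[OF n] by blast
  next
    case False
    with sign have "0 \<le> - a" "0 \<le> - b" by simp_all
    moreover have "(- a) ^ n = (- b) ^ n" using assms by simp
    ultimately have "- a = - b" using power_eq_iff_eq_base[OF n] by blast
    then show ?thesis by simp
  qed
qed

definition eisenstein_norm :: "int \<Rightarrow> int \<Rightarrow> int" where
  "eisenstein_norm m n = m^2 + m*n + n^2"

lemma allowable_imp_coprime: "allowable m n \<Longrightarrow> coprime m n"
  by (simp add: allowable_def coprime_iff_gcd_eq_1)

lemma coprime_imp_coprime_sum:
  fixes m n :: int
  assumes "coprime m n"
  shows "coprime m (m + n)" "coprime n (m + n)"
  using assms by (simp_all add: coprime_iff_gcd_eq_1, metis gcd.commute gcd_add1)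

lemma allowable_nonzero:
  assumes "allowable m n"
  shows "m \<noteq> 0" "n \<noteq> 0" "m + n \<noteq> 0"
  using assms by (auto simp: allowable_def)

lemma odd_eisenstein_norm:
  assumes "coprime m n"
  shows "odd (eisenstein_norm m n)"
proof -
  have "\<not> (even m \<and> even n)"
    using assms by (metis coprime_common_divisor odd_one dvd_refl)
  then show ?thesis by (auto simp: eisenstein_norm_def power2_eq_square)
qed

lemma eisenstein_norm_gt_one:
  assumes "allowable m n"
  shows "1 < eisenstein_norm m n"
proof -
  have "2 * eisenstein_norm m n = m^2 + n^2 + (m + n)^2"
    by (simp add: eisenstein_norm_def power2_eq_square algebra_simps)
  moreover have "0 < m^2" "0 < n^2" "0 < (m + n)^2"
    using allowable_nonzero[OF assms] by simp_all
  ultimately show ?thesis by linarith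
qed

lemma coprime_eisenstein_norm:
  assumes "coprime m n"
  shows "coprime (eisenstein_norm m n) m" "coprime (eisenstein_norm m n) n"
    "coprime (eisenstein_norm m n) (m + n)"
proof -
  have shift: "coprime x (k * x + y) \<longleftrightarrow> coprime x y" for x k y :: int
    by (simp add: coprime_iff_gcd_eq_1 gcd_add_mult)
  have "coprime m ((m + n) * m + n^2)" "coprime n ((m + n) * n + m^2)"
    "coprime (m + n) ((m + n) * (m + n) + - (m * n))"
    unfolding shift using assms coprime_imp_coprime_sum[OF assms] by (simp_all add: coprime_commute)
  moreover have "(m + n) * m + n^2 = eisenstein_norm m n" "(m + n) * n + m^2 = eisenstein_norm m n"
    "(m + n) * (m + n) + - (m * n) = eisenstein_norm m n"
    by (simp_all add: eisenstein_norm_def power2_eq_square algebra_simps)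
  ultimately show "coprime (eisenstein_norm m n) m" "coprime (eisenstein_norm m n) n"
    "coprime (eisenstein_norm m n) (m + n)"
    by (simp_all add: coprime_commute)
qed

lemma numerator_diff_identities:
  "t1 m n - t2 m n = 2 * n * eisenstein_norm m n"
  "t2 m n + t3 m n = 2 * m * eisenstein_norm m n"
  "t1 m n + t3 m n = 2 * (m + n) * eisenstein_norm m n"
  by (simp_all add: t1_def t2_def t3_def eisenstein_norm_def power2_eq_square power3_eq_cube algebra_simps)

lemma numerator_sum_identities:
  "t1 m n + t2 m n = 2 * (m^2 * (m + n))"
  "t2 m n - t3 m n = - (2 * ((m + n)^2 * n))"
  "t1 m n - t3 m n = - (2 * (n^2 * m))"
  by (simp_all add: t1_def t2_def t3_def power2_eq_square power3_eq_cube algebra_simps)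

lemma not_both_exactly_dvd_cyclic:
  fixes d x y z :: int
  assumes "coprime x y" "coprime x z"
  shows "\<not> (exactly_dvd d (x^2 * y) \<and> exactly_dvd d (y^2 * z))"
proof
  assume "exactly_dvd d (x^2 * y) \<and> exactly_dvd d (y^2 * z)"
  then have "d dvd x^2 * y" "d dvd y^2 * z" "\<not> d^2 dvd y^2 * z" by (simp_all add: exactly_dvd_def)
  have "coprime (y^2 * z) x" using assms by (simp add: coprime_commute)
  then have "coprime d (x^2)" using \<open>d dvd y^2 * z\<close> coprime_divisors[of d "y^2 * z" x x] by simp
  then have "d dvd y" using \<open>d dvd x^2 * y\<close> by (simp add: coprime_dvd_mult_right_iff)
  then have "d^2 dvd y^2 * z" by (simp add: dvd_power_same)
  with \<open>\<not> d^2 dvd y^2 * z\<close> show False ..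
qed

lemma numerator_differences_exactly_dvd:
  assumes "allowable m n"
  shows "exactly_dvd (eisenstein_norm m n) (t1 m n - t2 m n)"
    "exactly_dvd (eisenstein_norm m n) (t2 m n + t3 m n)"
    "exactly_dvd (eisenstein_norm m n) (t1 m n + t3 m n)"
proof -
  let ?N = "eisenstein_norm m n"
  have N: "?N \<noteq> 0" "\<not> is_unit ?N" using eisenstein_norm_gt_one[OF assms] by auto
  have "coprime ?N 2" using odd_eisenstein_norm[OF allowable_imp_coprime[OF assms]] by simp
  then have cop: "coprime ?N (2 * x)" if "x \<in> {m, n, m + n}" for x
    using that coprime_eisenstein_norm[OF allowable_imp_coprime[OF assms]] by auto
  show "exactly_dvd ?N (t1 m n - t2 m n)" "exactly_dvd ?N (t2 m n + t3 m n)"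
    "exactly_dvd ?N (t1 m n + t3 m n)"
    unfolding numerator_diff_identities by (rule exactly_dvd_mult_self[OF N cop], simp)+
qed

lemma numerator_pair_sums_not_both_exactly_dvd:
  assumes "allowable m n" "odd d"
  shows "\<not> (exactly_dvd d (t1 m n + t2 m n) \<and> exactly_dvd d (t2 m n - t3 m n))"
    "\<not> (exactly_dvd d (t2 m n - t3 m n) \<and> exactly_dvd d (t1 m n - t3 m n))"
    "\<not> (exactly_dvd d (t1 m n - t3 m n) \<and> exactly_dvd d (t1 m n + t2 m n))"
proof -
  have mn: "coprime m n" using allowable_imp_coprime[OF assms(1)] .
  note sum = coprime_imp_coprime_sum[OF mn]
  have "coprime d 2" using assms(2) by simp
  then show "\<not> (exactly_dvd d (t1 m n + t2 m n) \<and> exactly_dvd d (t2 m n - t3 m n))"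
    "\<not> (exactly_dvd d (t2 m n - t3 m n) \<and> exactly_dvd d (t1 m n - t3 m n))"
    "\<not> (exactly_dvd d (t1 m n - t3 m n) \<and> exactly_dvd d (t1 m n + t2 m n))"
    unfolding numerator_sum_identities
    using not_both_exactly_dvd_cyclic[of m "m + n" n d] not_both_exactly_dvd_cyclic[of "m + n" n m d]
      not_both_exactly_dvd_cyclic[of n m "m + n" d] mn sum
    by (simp_all add: exactly_dvd_mult_coprime coprime_commute)
qed

lemma abs_numerators_distinct:
  assumes "allowable m n"
  shows "distinct [\<bar>t1 m n\<bar>, \<bar>t2 m n\<bar>, \<bar>t3 m n\<bar>]"
proof -
  have abs_ne: "\<bar>x\<bar> \<noteq> \<bar>y\<bar>" if "x - y \<noteq> 0" "x + y \<noteq> 0" for x y :: int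
    using that by linarith
  have "eisenstein_norm m n \<noteq> 0" using eisenstein_norm_gt_one[OF assms] by simp
  then show ?thesis
    using abs_ne[of "t1 m n" "t2 m n"] abs_ne[of "t1 m n" "t3 m n"] abs_ne[of "t2 m n" "t3 m n"]
      allowable_nonzero[OF assms]
    by (auto simp: numerator_diff_identities numerator_sum_identities)
qed

lemma numerators_signed_permutation:
  assumes "allowable m1 n1" "allowable m2 n2"
    and "{\<bar>t1 m1 n1\<bar>, \<bar>t2 m1 n1\<bar>, \<bar>t3 m1 n1\<bar>} = {\<bar>t1 m2 n2\<bar>, \<bar>t2 m2 n2\<bar>, \<bar>t3 m2 n2\<bar>}"
  obtains \<epsilon> c1 c2 c3 where "\<epsilon> \<in> {1, -1}"
    "c1 \<in> {t1 m1 n1, t2 m1 n1, - t3 m1 n1}" "c2 \<in> {t1 m1 n1, t2 m1 n1, - t3 m1 n1}"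
    "c3 \<in> {t1 m1 n1, t2 m1 n1, - t3 m1 n1}" "distinct [c1, c2, c3]"
    "t1 m2 n2 = \<epsilon> * c1" "t2 m2 n2 = \<epsilon> * c2" "- t3 m2 n2 = \<epsilon> * c3"
proof (rule signed_permutation_of_abs[where d = "eisenstein_norm m1 n1"])
  show "\<bar>t1 m2 n2\<bar> \<in> {\<bar>t1 m1 n1\<bar>, \<bar>t2 m1 n1\<bar>, \<bar>- t3 m1 n1\<bar>}"
    "\<bar>t2 m2 n2\<bar> \<in> {\<bar>t1 m1 n1\<bar>, \<bar>t2 m1 n1\<bar>, \<bar>- t3 m1 n1\<bar>}"
    "\<bar>- t3 m2 n2\<bar> \<in> {\<bar>t1 m1 n1\<bar>, \<bar>t2 m1 n1\<bar>, \<bar>- t3 m1 n1\<bar>}"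
    using assms(3) by simp_all
  show "distinct [\<bar>t1 m2 n2\<bar>, \<bar>t2 m2 n2\<bar>, \<bar>- t3 m2 n2\<bar>]"
    using abs_numerators_distinct[OF assms(2)] by simp
  show "exactly_dvd (eisenstein_norm m1 n1) (t1 m1 n1 - t2 m1 n1)"
    "exactly_dvd (eisenstein_norm m1 n1) (t2 m1 n1 - - t3 m1 n1)"
    "exactly_dvd (eisenstein_norm m1 n1) (t1 m1 n1 - - t3 m1 n1)"
    using numerator_differences_exactly_dvd[OF assms(1)] by simp_all
  show "\<not> (exactly_dvd (eisenstein_norm m1 n1) (t1 m2 n2 + t2 m2 n2)
      \<and> exactly_dvd (eisenstein_norm m1 n1) (t2 m2 n2 + - t3 m2 n2))"
    "\<not> (exactly_dvd (eisenstein_norm m1 n1) (t2 m2 n2 + - t3 m2 n2)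
      \<and> exactly_dvd (eisenstein_norm m1 n1) (- t3 m2 n2 + t1 m2 n2))"
    "\<not> (exactly_dvd (eisenstein_norm m1 n1) (- t3 m2 n2 + t1 m2 n2)
      \<and> exactly_dvd (eisenstein_norm m1 n1) (t1 m2 n2 + t2 m2 n2))"
    using numerator_pair_sums_not_both_exactly_dvd[OF assms(2)
        odd_eisenstein_norm[OF allowable_imp_coprime[OF assms(1)]]]
    by simp_all
qed (rule that)

lemma cycle_symmetric_functions:
  fixes m n :: int
  defines "D \<equiv> 2 * m * n * (m + n)"
  shows "3 * A m n = (t1 m n)^2 + (t2 m n)^2 + (- t3 m n)^2 - D * (t1 m n + t2 m n + - t3 m n)"
    and "D^3 = (t1 m n + t2 m n) * (t2 m n + - t3 m n) * (- t3 m n + t1 m n)"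
    and "B m n = D^2"
  unfolding D_def t1_def t2_def t3_def A_def B_def by algebra+

lemma cval_eq_if_signed_permutation:
  assumes \<epsilon>: "\<epsilon> \<in> {1, -1}"
    and c: "c1 \<in> {t1 m1 n1, t2 m1 n1, - t3 m1 n1}" "c2 \<in> {t1 m1 n1, t2 m1 n1, - t3 m1 n1}"
      "c3 \<in> {t1 m1 n1, t2 m1 n1, - t3 m1 n1}" "distinct [c1, c2, c3]"
    and b: "t1 m2 n2 = \<epsilon> * c1" "t2 m2 n2 = \<epsilon> * c2" "- t3 m2 n2 = \<epsilon> * c3"
  shows "cval m1 n1 = cval m2 n2"
proof -
  define D1 D2 where "D1 = 2 * m1 * n1 * (m1 + n1)" and "D2 = 2 * m2 * n2 * (m2 + n2)"
  note sym = symmetric_fun_perm_eq[OF _ _ c]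
  have sq: "c1^2 + c2^2 + c3^2 = (t1 m1 n1)^2 + (t2 m1 n1)^2 + (- t3 m1 n1)^2"
    by (rule sym) (simp_all add: ac_simps)
  have sum: "c1 + c2 + c3 = t1 m1 n1 + t2 m1 n1 + - t3 m1 n1"
    by (rule sym) (simp_all add: ac_simps)
  have prod: "(c1 + c2) * (c2 + c3) * (c3 + c1)
      = (t1 m1 n1 + t2 m1 n1) * (t2 m1 n1 + - t3 m1 n1) * (- t3 m1 n1 + t1 m1 n1)"
    by (rule sym) (simp_all add: ac_simps)
  have \<epsilon>_sq: "\<epsilon> * \<epsilon> = 1" using \<epsilon> by auto
  have "D2^3 = (\<epsilon> * c1 + \<epsilon> * c2) * (\<epsilon> * c2 + \<epsilon> * c3) * (\<epsilon> * c3 + \<epsilon> * c1)"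
    unfolding D2_def cycle_symmetric_functions(2) b ..
  also have "\<dots> = (\<epsilon> * \<epsilon>) * \<epsilon> * ((c1 + c2) * (c2 + c3) * (c3 + c1))"
    by (simp add: algebra_simps)
  also have "\<dots> = (\<epsilon> * \<epsilon>) * \<epsilon> * D1^3"
    unfolding prod D1_def cycle_symmetric_functions(2) ..
  also have "\<dots> = (\<epsilon> * D1)^3"
    by (simp add: power3_eq_cube algebra_simps)
  finally have D2: "D2 = \<epsilon> * D1" by (rule odd_power_eq_imp_eq[rotated]) simp
  have "3 * A m2 n2 = (\<epsilon> * c1)^2 + (\<epsilon> * c2)^2 + (\<epsilon> * c3)^2 - D2 * (\<epsilon> * c1 + \<epsilon> * c2 + \<epsilon> * c3)"
    unfolding D2_def cycle_symmetric_functions(1) b ..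
  also have "\<dots> = (\<epsilon> * \<epsilon>) * (c1^2 + c2^2 + c3^2 - D1 * (c1 + c2 + c3))"
    unfolding D2 by (simp add: power2_eq_square algebra_simps)
  also have "\<dots> = 3 * A m1 n1"
    unfolding \<epsilon>_sq sq sum D1_def cycle_symmetric_functions(1) by simp
  finally have "A m1 n1 = A m2 n2" by simp
  moreover have "B m2 n2 = (\<epsilon> * \<epsilon>) * B m1 n1"
    unfolding cycle_symmetric_functions(3) D1_def[symmetric] D2_def[symmetric] D2
    by (simp add: power2_eq_square algebra_simps)
  ultimately show ?thesis using \<epsilon>_sq by (simp add: cval_def)
qed

theorem theorem9:
  fixes m1 n1 m2 n2 :: int
  assumes "allowable m1 n1" and "allowable m2 n2"
    and "{\<bar>t1 m1 n1\<bar>, \<bar>t2 m1 n1\<bar>, \<bar>t3 m1 n1\<bar>} = {\<bar>t1 m2 n2\<bar>, \<bar>t2 m2 n2\<bar>, \<bar>t3 m2 n2\<bar>}"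
  shows "cval m1 n1 = cval m2 n2"
proof -
  obtain \<epsilon> c1 c2 c3 where "\<epsilon> \<in> {1, -1}"
    "c1 \<in> {t1 m1 n1, t2 m1 n1, - t3 m1 n1}" "c2 \<in> {t1 m1 n1, t2 m1 n1, - t3 m1 n1}"
    "c3 \<in> {t1 m1 n1, t2 m1 n1, - t3 m1 n1}" "distinct [c1, c2, c3]"
    "t1 m2 n2 = \<epsilon> * c1" "t2 m2 n2 = \<epsilon> * c2" "- t3 m2 n2 = \<epsilon> * c3"
    using numerators_signed_permutation[OF assms] .
  then show ?thesis by (rule cval_eq_if_signed_permutation)
qed

end
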